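(* If the extended Markov monoid of a probabilistic automaton $\mathcal{A}$ contains a leak witness, then the Markov monoid of $\mathcal{A}$ contains a non-simplicity witness.
   Context: Fix a finite alphabet $A$ and a probabilistic automaton $\mathcal{A}=(Q,q_0,\Delta,F)$, $\Delta:Q\times A\to\mathcal{D}(Q)$. A limit-word is a map $\mathbf{u}:Q\times Q\to\{0,1\}$ such that every $s$ has some $t$ with $\mathbf{u}(s,t)=1$. Concatenation: $(\mathbf{u}\cdot\mathbf{v})(s,t)=1$ iff there is $q$ with $\mathbf{u}(s,q)=\mathbf{v}(q,t)=1$ (written $\mathbf{u}\mathbf{v}$). $\mathbf{u}$ is idempotent if $\mathbf{u}\mathbf{u}=\mathbf{u}$; for idempotent $\mathbf{u}$, $s$ is $\mathbf{u}$-recurrent if for all $t$, $\mathbf{u}(s,t)=1\Rightarrow\mathbf{u}(t,s)=1$, and $\mathbf{u}$-transient otherwise; $\mathbf{u}^\sharp(s,t)=1$ iff $\mathbf{u}(s,t)=1$ and $t$ is $\mathbf{u}$-recurrent. For $a\in A$, $\mathbf{a}(s,t)=1$ iff $\Delta(s,a)(t)>0$; $\mathbf{1}$ is the identity. The Markov monoid of $\mathcal{A}$ is the smallest set of limit-words containing $\{\mathbf{a}\mid a\in A\}\cup\{\mathbf{1}\}$ and closed under concatenation and iteration of idempotents. An extended limit-word is a pair $(\mathbf{u},\mathbf{u}_+)$ of limit-words with $\mathbf{u}\le\mathbf{u}_+$ pointwise; concatenation is componentwise, $(\mathbf{u},\mathbf{u}_+)$ is idempotent if both components are, and then $(\mathbf{u},\mathbf{u}_+)^\sharp=(\mathbf{u}^\sharp,\mathbf{u}_+)$.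 The extended Markov monoid is the smallest set of extended limit-words containing $\{(\mathbf{a},\mathbf{a})\mid a\in A\}\cup\{(\mathbf{1},\mathbf{1})\}$ and closed under concatenation and iteration of idempotents. A leak witness is an idempotent extended limit-word $(\mathbf{u},\mathbf{u}_+)$ with states $r,q$ both $\mathbf{u}$-recurrent such that $\mathbf{u}(r,q)=0$ and $\mathbf{u}_+(r,q)=1$. A non-simplicity witness is a triple $(\mathbf{u},\mathbf{v},\mathbf{w})$ of elements of the Markov monoid, with $\mathbf{v}$ idempotent, for which there exist states $r,t$ such that: $\mathbf{u}\mathbf{v}^\sharp\mathbf{w}$ is idempotent, $r$ is $\mathbf{u}\mathbf{v}^\sharp\mathbf{w}$-recurrent, $(\mathbf{u}\mathbf{v})(r,t)=1$, and $t$ is $\mathbf{v}$-transient. *)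

theory Defs
  imports "HOL-Probability.Probability_Mass_Function"
begin

(* A probabilistic automaton over finite state type 'q and finite alphabet 'a:
   transition function Delta :: 'q => 'a => 'q pmf.  Initial state and final
   states do not influence the (extended) Markov monoid. *)

type_synonym 'q lword = "'q \<Rightarrow> 'q \<Rightarrow> bool"

definition limit_word :: "'q lword \<Rightarrow> bool" where
  "limit_word u \<longleftrightarrow> (\<forall>s. \<exists>t. u s t)"

definition lw_cat :: "'q lword \<Rightarrow> 'q lword \<Rightarrow> 'q lword" where
  "lw_cat u v = (\<lambda>s t. \<exists>q. u s q \<and> v q t)"

definition lw_idem :: "'q lword \<Rightarrow> bool" where
  "lw_idem u \<longleftrightarrow> lw_cat u u = u"

definition lw_recurrent :: "'q lword \<Rightarrow> 'q \<Rightarrow> bool" where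
  "lw_recurrent u s \<longleftrightarrow> (\<forall>t. u s t \<longrightarrow> u t s)"

definition lw_sharp :: "'q lword \<Rightarrow> 'q lword" where
  "lw_sharp u = (\<lambda>s t. u s t \<and> lw_recurrent u t)"

definition lw_letter :: "('q \<Rightarrow> 'a \<Rightarrow> 'q pmf) \<Rightarrow> 'a \<Rightarrow> 'q lword" where
  "lw_letter Delta a = (\<lambda>s t. pmf (Delta s a) t > 0)"

definition lw_one :: "'q lword" where
  "lw_one = (\<lambda>s t. s = t)"

inductive_set markov_monoid :: "('q \<Rightarrow> 'a \<Rightarrow> 'q pmf) \<Rightarrow> 'q lword set"
  for Delta where
  letter: "lw_letter Delta a \<in> markov_monoid Delta"
| one: "lw_one \<in> markov_monoid Delta"
| cat: "u \<in> markov_monoid Delta \<Longrightarrow> v \<in> markov_monoid Delta \<Longrightarrow>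
        lw_cat u v \<in> markov_monoid Delta"
| iter: "u \<in> markov_monoid Delta \<Longrightarrow> lw_idem u \<Longrightarrow>
        lw_sharp u \<in> markov_monoid Delta"

definition elw_cat :: "'q lword \<times> 'q lword \<Rightarrow> 'q lword \<times> 'q lword \<Rightarrow> 'q lword \<times> 'q lword" where
  "elw_cat x y = (lw_cat (fst x) (fst y), lw_cat (snd x) (snd y))"

definition elw_idem :: "'q lword \<times> 'q lword \<Rightarrow> bool" where
  "elw_idem x \<longleftrightarrow> lw_idem (fst x) \<and> lw_idem (snd x)"

definition elw_sharp :: "'q lword \<times> 'q lword \<Rightarrow> 'q lword \<times> 'q lword" where
  "elw_sharp x = (lw_sharp (fst x), snd x)"

inductive_set ext_markov_monoid :: "('q \<Rightarrow> 'a \<Rightarrow> 'q pmf) \<Rightarrow> ('q lword \<times> 'q lword) set"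
  for Delta where
  letter: "(lw_letter Delta a, lw_letter Delta a) \<in> ext_markov_monoid Delta"
| one: "(lw_one, lw_one) \<in> ext_markov_monoid Delta"
| cat: "x \<in> ext_markov_monoid Delta \<Longrightarrow> y \<in> ext_markov_monoid Delta \<Longrightarrow>
        elw_cat x y \<in> ext_markov_monoid Delta"
| iter: "x \<in> ext_markov_monoid Delta \<Longrightarrow> elw_idem x \<Longrightarrow>
        elw_sharp x \<in> ext_markov_monoid Delta"

definition leak_witness :: "'q lword \<times> 'q lword \<Rightarrow> bool" where
  "leak_witness x \<longleftrightarrow> elw_idem x \<and>
     (\<exists>r q. lw_recurrent (fst x) r \<and> lw_recurrent (fst x) q \<and>
            \<not> fst x r q \<and> snd x r q)"

definition non_simplicity_witness :: "'q lword \<Rightarrow> 'q lword \<Rightarrow> 'q lword \<Rightarrow> bool" where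
  "non_simplicity_witness u v w \<longleftrightarrow> lw_idem v \<and>
     (\<exists>r t. lw_idem (lw_cat (lw_cat u (lw_sharp v)) w) \<and>
            lw_recurrent (lw_cat (lw_cat u (lw_sharp v)) w) r \<and>
            lw_cat u v r t \<and> \<not> lw_recurrent v t)"

end

theory Submission
  imports Defs
begin

(* Follow a derivation of an extended limit-word (u, u+). The only rule creating a pair s, t
   with u+ s t but not u s t is iteration, which deletes the edges of an idempotent v into
   v-transient states while keeping them in the second component. Such a gap therefore survives
   all further concatenations as a factorisation u = a v# b by elements of the Markov monoid in
   which a v leads from s to a v-transient state. For a leak witness u is idempotent and s = r is
   u-recurrent, so (a, v, b) is a non-simplicity witness. *)

lemma lw_cat_assoc: "lw_cat (lw_cat u v) w = lw_cat u (lw_cat v w)"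
  by (auto simp: lw_cat_def fun_eq_iff)

lemma lw_cat_one_left [simp]: "lw_cat lw_one u = u"
  by (auto simp: lw_cat_def lw_one_def fun_eq_iff)

lemma lw_cat_one_right [simp]: "lw_cat u lw_one = u"
  by (auto simp: lw_cat_def lw_one_def fun_eq_iff)

lemma lw_cat_sharp_absorb: "lw_idem u \<Longrightarrow> lw_cat u (lw_sharp u) = lw_sharp u"
  unfolding lw_idem_def lw_sharp_def by (metis (no_types, lifting) lw_cat_def)

definition transient_factorisation :: "('q \<Rightarrow> 'a \<Rightarrow> 'q pmf) \<Rightarrow> 'q lword \<Rightarrow> 'q \<Rightarrow> bool" where
  "transient_factorisation Delta u s \<longleftrightarrow>
     (\<exists>a v b t. a \<in> markov_monoid Delta \<and> v \<in> markov_monoid Delta \<and> b \<in> markov_monoid Delta \<and>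
        lw_idem v \<and> u = lw_cat (lw_cat a (lw_sharp v)) b \<and>
        lw_cat a v s t \<and> \<not> lw_recurrent v t)"

lemma transient_factorisation_sharp:
  assumes "v \<in> markov_monoid Delta" "lw_idem v" "v s t" "\<not> lw_recurrent v t"
  shows "transient_factorisation Delta (lw_sharp v) s"
  unfolding transient_factorisation_def
  using assms markov_monoid.one[of Delta] by (metis lw_cat_one_left lw_cat_one_right)

lemma transient_factorisation_cat_right:
  assumes "transient_factorisation Delta u s" "w \<in> markov_monoid Delta"
  shows "transient_factorisation Delta (lw_cat u w) s"
proof -
  obtain a v b t where fact: "a \<in> markov_monoid Delta" "v \<in> markov_monoid Delta"
      "b \<in> markov_monoid Delta" "lw_idem v" "u = lw_cat (lw_cat a (lw_sharp v)) b"
      "lw_cat a v s t" "\<not> lw_recurrent v t"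
    using assms(1) unfolding transient_factorisation_def by blast
  have "lw_cat u w = lw_cat (lw_cat a (lw_sharp v)) (lw_cat b w)"
    using fact(5) by (simp add: lw_cat_assoc)
  then show ?thesis
    unfolding transient_factorisation_def using fact assms(2) markov_monoid.cat by blast
qed

lemma transient_factorisation_cat_left:
  assumes "transient_factorisation Delta u q" "w \<in> markov_monoid Delta" "w s q"
  shows "transient_factorisation Delta (lw_cat w u) s"
proof -
  obtain a v b t where fact: "a \<in> markov_monoid Delta" "v \<in> markov_monoid Delta"
      "b \<in> markov_monoid Delta" "lw_idem v" "u = lw_cat (lw_cat a (lw_sharp v)) b"
      "lw_cat a v q t" "\<not> lw_recurrent v t"
    using assms(1) unfolding transient_factorisation_def by blast
  have "lw_cat w u = lw_cat (lw_cat (lw_cat w a) (lw_sharp v)) b"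
    using fact(5) by (simp add: lw_cat_assoc)
  moreover have "lw_cat (lw_cat w a) v s t"
    using assms(3) fact(6) by (auto simp: lw_cat_def)
  ultimately show ?thesis
    unfolding transient_factorisation_def using fact assms(2) markov_monoid.cat by blast
qed

lemma ext_markov_monoid_fst_in_markov_monoid:
  "x \<in> ext_markov_monoid Delta \<Longrightarrow> fst x \<in> markov_monoid Delta"
  by (induction rule: ext_markov_monoid.induct)
     (auto simp: elw_cat_def elw_idem_def elw_sharp_def intro: markov_monoid.intros)

lemma ext_markov_monoid_gap_transient_factorisation:
  assumes "x \<in> ext_markov_monoid Delta"
  shows "snd x s t \<Longrightarrow> \<not> fst x s t \<Longrightarrow> transient_factorisation Delta (fst x) s"
  using assms
proof (induction arbitrary: s t rule: ext_markov_monoid.induct)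
  case (cat x y)
  obtain q where q: "snd x s q" "snd y q t"
    using cat.prems(1) by (auto simp: elw_cat_def lw_cat_def)
  have y_in: "fst y \<in> markov_monoid Delta"
    using cat.hyps(2) by (rule ext_markov_monoid_fst_in_markov_monoid)
  show ?case
  proof (cases "fst x s q")
    case False
    then show ?thesis
      using cat.IH(1)[OF q(1)] y_in transient_factorisation_cat_right
      by (fastforce simp: elw_cat_def)
  next
    case True
    then have "\<not> fst y q t"
      using cat.prems(2) by (auto simp: elw_cat_def lw_cat_def)
    then show ?thesis
      using cat.IH(2)[OF q(2)] True transient_factorisation_cat_left
        ext_markov_monoid_fst_in_markov_monoid[OF cat.hyps(1)]
      by (fastforce simp: elw_cat_def)
  qed
next
  case (iter x)
  have x_in: "fst x \<in> markov_monoid Delta"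
    using iter.hyps(1) by (rule ext_markov_monoid_fst_in_markov_monoid)
  have idem: "lw_idem (fst x)"
    using iter.hyps(2) by (simp add: elw_idem_def)
  show ?case
  proof (cases "fst x s t")
    case False
    have "transient_factorisation Delta (lw_cat (fst x) (lw_sharp (fst x))) s"
      using iter.IH[OF iter.prems(1)[unfolded elw_sharp_def snd_conv] False]
        markov_monoid.iter[OF x_in idem] by (rule transient_factorisation_cat_right)
    then show ?thesis
      by (simp add: elw_sharp_def lw_cat_sharp_absorb[OF idem])
  next
    case True
    then have "\<not> lw_recurrent (fst x) t"
      using iter.prems(2) by (simp add: elw_sharp_def lw_sharp_def)
    then show ?thesis
      using transient_factorisation_sharp[OF x_in idem True] by (simp add: elw_sharp_def)
  qed
qed (simp_all add: lw_one_def)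

lemma transient_factorisation_non_simplicity_witness:
  assumes "transient_factorisation Delta u r" "lw_idem u" "lw_recurrent u r"
  shows "\<exists>a \<in> markov_monoid Delta. \<exists>v \<in> markov_monoid Delta. \<exists>b \<in> markov_monoid Delta.
           non_simplicity_witness a v b"
  using assms unfolding transient_factorisation_def non_simplicity_witness_def by metis

theorem proposition5p14:
  fixes Delta :: "'q::finite \<Rightarrow> 'a::finite \<Rightarrow> 'q pmf"
  assumes "\<exists>x \<in> ext_markov_monoid Delta. leak_witness x"
  shows "\<exists>u \<in> markov_monoid Delta. \<exists>v \<in> markov_monoid Delta. \<exists>w \<in> markov_monoid Delta.
           non_simplicity_witness u v w"
proof -
  obtain x r q where x: "x \<in> ext_markov_monoid Delta" "elw_idem x"
      and r: "lw_recurrent (fst x) r" "\<not> fst x r q" "snd x r q"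
    using assms unfolding leak_witness_def by blast
  have "transient_factorisation Delta (fst x) r"
    using ext_markov_monoid_gap_transient_factorisation[OF x(1) r(3) r(2)] .
  moreover have "lw_idem (fst x)"
    using x(2) by (simp add: elw_idem_def)
  ultimately show ?thesis
    using r(1) by (rule transient_factorisation_non_simplicity_witness)
qed

end
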